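(* Let $p\in[1,\infty]$, $(f_u)_{u\in[0,T]}$ non-constant functions $f_u:\mathbb{R}^2\to[-\infty,+\infty)$, $(U_u)_u$ concave non-decreasing non-trivial functions $U_u:[-\infty,\infty)\to[-\infty,\infty)$, and $(B_{tu})_{0\le t\le u\le T}$ real numbers, and let $(\rho_{tu})$ be the h-generalized shortfall risk measure. Then, for every $0\le t\le u\le T$: (a) if $(y,m)\mapsto U_u(f_u(y,m))$ is non-decreasing in $y$ and in $m$ and concave in $y$, then $\rho_{tu}$ is monotone ($X\le Y\Rightarrow\rho_{tu}(X)\ge\rho_{tu}(Y)$) and quasi-convex: $\rho_{tu}(\lambda X+(1-\lambda)Y)\le\max\{\rho_{tu}(X),\rho_{tu}(Y)\}$ for $\lambda\in[0,1]$, $X,Y\in L^p(\mathcal{F}_u)$; (b) if in addition $U_u\circ f_u$ is jointly concave in $(y,m)$, then $\rho_{tu}$ is convex; (c) if in addition to (a), $f_u(y,k)\le f_u(y-m,k+m)$ for all $y,k\in\mathbb{R}$, $m>0$, then $\rho_{tu}(X+m_t)\ge\rho_{tu}(X)-m_t$ for all $X\in L^p(\mathcal{F}_u)$ and $m_t\in L^p(\mathcal{F}_t)$, $m_t\ge0$.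
   Context: $(\mathcal{F}_t)_{t\in[0,T]}$ is a filtration on $(\Omega,\mathcal{F},P)$. The h-generalized shortfall risk measure is $$\rho_{tu}(X)=\operatorname{ess.inf}\{m_t\in L^p(\mathcal{F}_t):E[U_u(f_u(X,m_t))\mid\mathcal{F}_t]\ge B_{tu}\},\qquad X\in L^p(\mathcal{F}_u),$$ with $\operatorname{ess.inf}\emptyset=+\infty$; conditional expectations are assumed well defined in the extended sense. *)

theory Defs
  imports "HOL-Probability.Probability"
begin

definition memLp :: "'a measure \<Rightarrow> 'a measure \<Rightarrow> ereal \<Rightarrow> ('a \<Rightarrow> real) \<Rightarrow> bool" where
  "memLp M N p X \<longleftrightarrow> X \<in> borel_measurable N \<and>
     (if p = \<infinity> then (\<exists>C. AE x in M. \<bar>X x\<bar> \<le> C)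
      else integrable M (\<lambda>x. \<bar>X x\<bar> powr real_of_ereal p))"

text \<open>Conditional expectation in the extended sense: E[Z+|N] - E[Z-|N].\<close>
definition ext_cond_exp :: "'a measure \<Rightarrow> 'a measure \<Rightarrow> ('a \<Rightarrow> ereal) \<Rightarrow> 'a \<Rightarrow> ereal" where
  "ext_cond_exp M N Z = (\<lambda>\<omega>. enn2ereal (nn_cond_exp M N (\<lambda>x. e2ennreal (Z x)) \<omega>)
                             - enn2ereal (nn_cond_exp M N (\<lambda>x. e2ennreal (- Z x)) \<omega>))"

definition ext_cond_exp_wd :: "'a measure \<Rightarrow> 'a measure \<Rightarrow> ('a \<Rightarrow> ereal) \<Rightarrow> bool" where
  "ext_cond_exp_wd M N Z \<longleftrightarrow> Z \<in> borel_measurable M \<and>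
     (AE \<omega> in M. \<not> (nn_cond_exp M N (\<lambda>x. e2ennreal (Z x)) \<omega> = \<infinity> \<and>
                      nn_cond_exp M N (\<lambda>x. e2ennreal (- Z x)) \<omega> = \<infinity>))"

text \<open>Z is (a version of) the essential infimum, in the lattice of N-measurable
  extended-real random variables ordered a.s., of the family S.  For S empty this
  forces Z = +infinity a.s.\<close>
definition is_ess_inf :: "'a measure \<Rightarrow> 'a measure \<Rightarrow> ('a \<Rightarrow> real) set \<Rightarrow> ('a \<Rightarrow> ereal) \<Rightarrow> bool" where
  "is_ess_inf M N S Z \<longleftrightarrow> Z \<in> borel_measurable N \<and>
     (\<forall>Y\<in>S. AE x in M. Z x \<le> ereal (Y x)) \<and>
     (\<forall>W \<in> borel_measurable N. (\<forall>Y\<in>S. AE x in M. W x \<le> ereal (Y x)) \<longrightarrow> (AE x in M. W x \<le> Z x))"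

definition shortfall_accept ::
  "'a measure \<Rightarrow> (real \<Rightarrow> 'a measure) \<Rightarrow> ereal \<Rightarrow> (real \<Rightarrow> real \<Rightarrow> real \<Rightarrow> ereal) \<Rightarrow>
   (real \<Rightarrow> ereal \<Rightarrow> ereal) \<Rightarrow> (real \<Rightarrow> real \<Rightarrow> real) \<Rightarrow> real \<Rightarrow> real \<Rightarrow> ('a \<Rightarrow> real) \<Rightarrow> ('a \<Rightarrow> real) set" where
  "shortfall_accept M F p f U B t u X =
     {m. memLp M (F t) p m \<and>
         (AE \<omega> in M. ereal (B t u) \<le> ext_cond_exp M (F t) (\<lambda>x. U u (f u (X x) (m x))) \<omega>)}"

definition is_shortfall_rm ::
  "'a measure \<Rightarrow> (real \<Rightarrow> 'a measure) \<Rightarrow> ereal \<Rightarrow> (real \<Rightarrow> real \<Rightarrow> real \<Rightarrow> ereal) \<Rightarrow>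
   (real \<Rightarrow> ereal \<Rightarrow> ereal) \<Rightarrow> (real \<Rightarrow> real \<Rightarrow> real) \<Rightarrow> real \<Rightarrow> real \<Rightarrow> ('a \<Rightarrow> real) \<Rightarrow> ('a \<Rightarrow> ereal) \<Rightarrow> bool" where
  "is_shortfall_rm M F p f U B t u X Z \<longleftrightarrow> is_ess_inf M (F t) (shortfall_accept M F p f U B t u X) Z"

definition concave_ereal_on :: "ereal set \<Rightarrow> (ereal \<Rightarrow> ereal) \<Rightarrow> bool" where
  "concave_ereal_on S g \<longleftrightarrow> (\<forall>x\<in>S. \<forall>y\<in>S. \<forall>l::real. 0 \<le> l \<and> l \<le> 1 \<longrightarrow>
     ereal l * g x + ereal (1 - l) * g y \<le> g (ereal l * x + ereal (1 - l) * y))"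

definition concave_real_ereal :: "(real \<Rightarrow> ereal) \<Rightarrow> bool" where
  "concave_real_ereal g \<longleftrightarrow> (\<forall>x y. \<forall>l::real. 0 \<le> l \<and> l \<le> 1 \<longrightarrow>
     ereal l * g x + ereal (1 - l) * g y \<le> g (l * x + (1 - l) * y))"

definition jointly_concave_ereal :: "(real \<Rightarrow> real \<Rightarrow> ereal) \<Rightarrow> bool" where
  "jointly_concave_ereal h \<longleftrightarrow> (\<forall>y1 m1 y2 m2. \<forall>l::real. 0 \<le> l \<and> l \<le> 1 \<longrightarrow>
     ereal l * h y1 m1 + ereal (1 - l) * h y2 m2 \<le> h (l * y1 + (1 - l) * y2) (l * m1 + (1 - l) * m2))"

end

theory Submission
  imports Defs
begin

text \<open>Write \<open>A(X)\<close> for the acceptance set of \<open>X\<close>, so that \<open>\<rho>(X)\<close> is its essential infimum.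
  The acceptance sets are closed under concave domination: if \<open>U(f(X,m))\<close> dominates a convex
  combination of \<open>U(f(X\<^sub>1,m\<^sub>1))\<close> and \<open>U(f(X\<^sub>2,m\<^sub>2))\<close> with \<open>m\<^sub>i \<in> A(X\<^sub>i)\<close>, then
  \<open>m \<in> A(X)\<close>, since the extended conditional expectation is monotone and linear on positive and
  negative parts. Under the respective hypotheses this gives \<open>A(X) \<subseteq> A(Y)\<close> for \<open>X \<le> Y\<close>,
  \<open>max m\<^sub>X m\<^sub>Y \<in> A(\<lambda>X + (1-\<lambda>)Y)\<close>, \<open>\<lambda>m\<^sub>X + (1-\<lambda>)m\<^sub>Y \<in> A(\<lambda>X + (1-\<lambda>)Y)\<close>, and
  \<open>m + m\<^sub>t \<in> A(X)\<close> for \<open>m \<in> A(X + m\<^sub>t)\<close>. The essential infimum turns inclusions into the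
  inequalities (a) and (c). For the binary operations in (a) and (b) the infimum over pairs
  \<open>(m\<^sub>X, m\<^sub>Y)\<close> is reduced to the pair of infima one argument at a time, using that \<open>max\<close> and
  \<open>\<lambda>x + (1-\<lambda>)y\<close> (for \<open>0 < \<lambda> < 1\<close>) have a residual in each argument.\<close>

section \<open>Extended conditional expectation\<close>

lemma pos_neg_parts_le:
  fixes a b r r1 r2 :: real
  assumes "a * r1 + b * r2 \<le> r"
  shows "max 0 (-r) + a * max 0 r1 + b * max 0 r2 \<le> max 0 r + a * max 0 (-r1) + b * max 0 (-r2)"
proof -
  have split: "max 0 x = max 0 (-x) + x" for x :: real by auto
  show ?thesis using assms split[of r] split[of r1] split[of r2] by (simp add: algebra_simps)
qed

lemma enn2ereal_e2ennreal_max: "enn2ereal (e2ennreal x) = max 0 x"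
  by (cases "0 \<le> x") (auto simp: enn2ereal_e2ennreal e2ennreal_neg max_def zero_ennreal.rep_eq)

lemma enn2ereal_lin_comb:
  assumes "0 \<le> a" "0 \<le> b"
  shows "enn2ereal (x + ennreal a * y + ennreal b * z) = enn2ereal x + ereal a * enn2ereal y + ereal b * enn2ereal z"
  using assms by (simp add: plus_ennreal.rep_eq times_ennreal.rep_eq)

lemma ereal_scaled_finite:
  fixes z :: ereal
  assumes "z < \<infinity>" "a = 0 \<or> z \<noteq> -\<infinity>"
  obtains r where "ereal a * z = ereal (a * r)" "ereal a * max 0 z = ereal (a * max 0 r)"
    "ereal a * max 0 (-z) = ereal (a * max 0 (-r))"
proof (cases z)
  case (real r)
  then show ?thesis using that[of r] by (simp del: ereal_max add: ereal_max_0)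
next
  case MInf
  then show ?thesis using that[of 0] assms by (simp add: zero_ereal_def[symmetric])
qed (use assms in simp)

lemma e2ennreal_pos_neg_parts_le:
  fixes z z1 z2 :: ereal and a b :: real
  assumes ab: "0 \<le> a" "0 \<le> b" and fin: "z1 < \<infinity>" "z2 < \<infinity>"
    and le: "ereal a * z1 + ereal b * z2 \<le> z"
  shows "e2ennreal (-z) + ennreal a * e2ennreal z1 + ennreal b * e2ennreal z2
    \<le> e2ennreal z + ennreal a * e2ennreal (-z1) + ennreal b * e2ennreal (-z2)"
  unfolding less_eq_ennreal.rep_eq enn2ereal_lin_comb[OF ab] enn2ereal_e2ennreal_max
proof (cases "z = \<infinity> \<or> (a \<noteq> 0 \<and> z1 = -\<infinity>) \<or> (b \<noteq> 0 \<and> z2 = -\<infinity>)")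
  case True
  then show "max 0 (-z) + ereal a * max 0 z1 + ereal b * max 0 z2
    \<le> max 0 z + ereal a * max 0 (-z1) + ereal b * max 0 (-z2)"
    using ab fin by (auto simp: ereal_mult_le_0_iff)
next
  case False
  obtain r1 where r1: "ereal a * z1 = ereal (a * r1)" "ereal a * max 0 z1 = ereal (a * max 0 r1)"
    "ereal a * max 0 (-z1) = ereal (a * max 0 (-r1))"
    using ereal_scaled_finite[of z1 a] False fin(1) by blast
  obtain r2 where r2: "ereal b * z2 = ereal (b * r2)" "ereal b * max 0 z2 = ereal (b * max 0 r2)"
    "ereal b * max 0 (-z2) = ereal (b * max 0 (-r2))"
    using ereal_scaled_finite[of z2 b] False fin(2) by blast
  obtain r where "z = ereal r" "a * r1 + b * r2 \<le> r"
    using False le r1 r2 by (cases z) auto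
  then show "max 0 (-z) + ereal a * max 0 z1 + ereal b * max 0 z2
    \<le> max 0 z + ereal a * max 0 (-z1) + ereal b * max 0 (-z2)"
    using pos_neg_parts_le[of a r1 b r2 r] r1 r2 by (simp del: ereal_max add: ereal_max_0)
qed

lemma ereal_le_diff_iff_add_le:
  fixes P N :: ennreal
  assumes "\<not> (P = \<infinity> \<and> N = \<infinity>)"
  shows "ereal B \<le> enn2ereal P - enn2ereal N \<longleftrightarrow> ereal B + enn2ereal N \<le> enn2ereal P"
  using assms by (cases P; cases N) auto

lemma enn2ereal_diff_ge_of_cross_le:
  fixes P N P1 N1 P2 N2 :: ennreal and a b B :: real
  assumes ab: "0 \<le> a" "0 \<le> b" "a + b = 1"
   and le: "N + ennreal a * P1 + ennreal b * P2 \<le> P + ennreal a * N1 + ennreal b * N2"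
   and wd: "\<not> (P = \<infinity> \<and> N = \<infinity>)" "\<not> (P1 = \<infinity> \<and> N1 = \<infinity>)" "\<not> (P2 = \<infinity> \<and> N2 = \<infinity>)"
   and level: "ereal B \<le> enn2ereal P1 - enn2ereal N1" "ereal B \<le> enn2ereal P2 - enn2ereal N2"
  shows "ereal B \<le> enn2ereal P - enn2ereal N"
proof -
  have B1: "ereal B + enn2ereal N1 \<le> enn2ereal P1" and B2: "ereal B + enn2ereal N2 \<le> enn2ereal P2"
    using level wd by (simp_all add: ereal_le_diff_iff_add_le)
  obtain n1 where n1: "enn2ereal N1 = ereal n1"
    using B1 wd(2) by (cases N1) auto
  obtain n2 where n2: "enn2ereal N2 = ereal n2"
    using B2 wd(3) by (cases N2) auto
  have le_ereal: "enn2ereal N + ereal a * enn2ereal P1 + ereal b * enn2ereal P2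
      \<le> enn2ereal P + ereal a * enn2ereal N1 + ereal b * enn2ereal N2"
    using le by (simp only: less_eq_ennreal.rep_eq enn2ereal_lin_comb[OF ab(1,2)])
  have "a * (B + n1) + b * (B + n2) = (a + b) * B + (a * n1 + b * n2)"
    by (simp add: algebra_simps)
  then have "enn2ereal N + ereal B + ereal (a * n1 + b * n2)
      = enn2ereal N + ereal a * ereal (B + n1) + ereal b * ereal (B + n2)"
    using ab(3) by (simp add: add.assoc)
  also have "\<dots> \<le> enn2ereal N + ereal a * enn2ereal P1 + ereal b * enn2ereal P2"
    using B1 B2 ab n1 n2 by (intro add_mono ereal_mult_left_mono) auto
  also have "\<dots> \<le> enn2ereal P + ereal (a * n1 + b * n2)"
    using le_ereal n1 n2 by (simp add: add.assoc)
  finally have "ereal B + enn2ereal N \<le> enn2ereal P"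
    by (simp add: ereal_add_le_add_iff2 add.commute)
  then show ?thesis using wd(1) by (simp add: ereal_le_diff_iff_add_le)
qed

lemma (in sigma_finite_subalgebra) nn_cond_exp_lin_comb:
  assumes [measurable]: "f \<in> borel_measurable M" "g \<in> borel_measurable M" "h \<in> borel_measurable M"
  shows "AE x in M. nn_cond_exp M F (\<lambda>x. f x + ennreal c * g x + ennreal d * h x) x
     = nn_cond_exp M F f x + ennreal c * nn_cond_exp M F g x + ennreal d * nn_cond_exp M F h x"
proof -
  have "AE x in M. nn_cond_exp M F (\<lambda>x. f x + ennreal c * g x) x + nn_cond_exp M F (\<lambda>x. ennreal d * h x) x
     = nn_cond_exp M F (\<lambda>x. f x + ennreal c * g x + ennreal d * h x) x"
    by (rule nn_cond_exp_sum) measurable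
  moreover have "AE x in M. nn_cond_exp M F f x + nn_cond_exp M F (\<lambda>x. ennreal c * g x) x
     = nn_cond_exp M F (\<lambda>x. f x + ennreal c * g x) x"
    by (rule nn_cond_exp_sum) measurable
  moreover have "AE x in M. ennreal c * nn_cond_exp M F g x = nn_cond_exp M F (\<lambda>x. ennreal c * g x) x"
    by (rule nn_cond_exp_prod) measurable
  moreover have "AE x in M. ennreal d * nn_cond_exp M F h x = nn_cond_exp M F (\<lambda>x. ennreal d * h x) x"
    by (rule nn_cond_exp_prod) measurable
  ultimately show ?thesis by eventually_elim simp
qed

lemma (in sigma_finite_subalgebra) nn_cond_exp_pos_neg_parts_le:
  fixes Z Z1 Z2 :: "'a \<Rightarrow> ereal" and a b :: real
  assumes ab: "0 \<le> a" "0 \<le> b"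
    and [measurable]: "Z \<in> borel_measurable M" "Z1 \<in> borel_measurable M" "Z2 \<in> borel_measurable M"
    and fin: "AE x in M. Z1 x < \<infinity>" "AE x in M. Z2 x < \<infinity>"
    and le: "AE x in M. ereal a * Z1 x + ereal b * Z2 x \<le> Z x"
  shows "AE x in M. nn_cond_exp M F (\<lambda>x. e2ennreal (- Z x)) x
      + ennreal a * nn_cond_exp M F (\<lambda>x. e2ennreal (Z1 x)) x + ennreal b * nn_cond_exp M F (\<lambda>x. e2ennreal (Z2 x)) x
    \<le> nn_cond_exp M F (\<lambda>x. e2ennreal (Z x)) x
      + ennreal a * nn_cond_exp M F (\<lambda>x. e2ennreal (- Z1 x)) x + ennreal b * nn_cond_exp M F (\<lambda>x. e2ennreal (- Z2 x)) x"
proof -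
  have "AE x in M. nn_cond_exp M F (\<lambda>x. e2ennreal (- Z x) + ennreal a * e2ennreal (Z1 x) + ennreal b * e2ennreal (Z2 x)) x
      \<le> nn_cond_exp M F (\<lambda>x. e2ennreal (Z x) + ennreal a * e2ennreal (- Z1 x) + ennreal b * e2ennreal (- Z2 x)) x"
  proof (rule nn_cond_exp_mono)
    show "AE x in M. e2ennreal (- Z x) + ennreal a * e2ennreal (Z1 x) + ennreal b * e2ennreal (Z2 x)
        \<le> e2ennreal (Z x) + ennreal a * e2ennreal (- Z1 x) + ennreal b * e2ennreal (- Z2 x)"
      using fin le by eventually_elim (rule e2ennreal_pos_neg_parts_le[OF ab])
  qed measurable
  moreover have "AE x in M. nn_cond_exp M F (\<lambda>x. e2ennreal (- Z x) + ennreal a * e2ennreal (Z1 x) + ennreal b * e2ennreal (Z2 x)) x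
      = nn_cond_exp M F (\<lambda>x. e2ennreal (- Z x)) x
        + ennreal a * nn_cond_exp M F (\<lambda>x. e2ennreal (Z1 x)) x + ennreal b * nn_cond_exp M F (\<lambda>x. e2ennreal (Z2 x)) x"
    by (rule nn_cond_exp_lin_comb) measurable
  moreover have "AE x in M. nn_cond_exp M F (\<lambda>x. e2ennreal (Z x) + ennreal a * e2ennreal (- Z1 x) + ennreal b * e2ennreal (- Z2 x)) x
      = nn_cond_exp M F (\<lambda>x. e2ennreal (Z x)) x
        + ennreal a * nn_cond_exp M F (\<lambda>x. e2ennreal (- Z1 x)) x + ennreal b * nn_cond_exp M F (\<lambda>x. e2ennreal (- Z2 x)) x"
    by (rule nn_cond_exp_lin_comb) measurable
  ultimately show ?thesis by eventually_elim simp
qed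

text \<open>\<open>Z1, Z2 < \<infinity>\<close> rules out the junk value \<open>\<infinity> + -\<infinity> = \<infinity>\<close> on the left of \<open>le\<close>.\<close>

lemma (in sigma_finite_subalgebra) ext_cond_exp_ge_of_convex_comb_le:
  fixes Z Z1 Z2 :: "'a \<Rightarrow> ereal" and a b B :: real
  assumes ab: "0 \<le> a" "0 \<le> b" "a + b = 1"
   and fin: "AE x in M. Z1 x < \<infinity>" "AE x in M. Z2 x < \<infinity>"
   and le: "AE x in M. ereal a * Z1 x + ereal b * Z2 x \<le> Z x"
   and wd: "ext_cond_exp_wd M F Z" "ext_cond_exp_wd M F Z1" "ext_cond_exp_wd M F Z2"
   and level: "AE x in M. ereal B \<le> ext_cond_exp M F Z1 x" "AE x in M. ereal B \<le> ext_cond_exp M F Z2 x"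
  shows "AE x in M. ereal B \<le> ext_cond_exp M F Z x"
proof -
  have "Z \<in> borel_measurable M" "Z1 \<in> borel_measurable M" "Z2 \<in> borel_measurable M"
    using wd by (auto simp: ext_cond_exp_wd_def)
  from nn_cond_exp_pos_neg_parts_le[OF ab(1,2) this fin le]
  show ?thesis
    using level wd[unfolded ext_cond_exp_wd_def, THEN conjunct2] unfolding ext_cond_exp_def
    by eventually_elim (auto intro: enn2ereal_diff_ge_of_cross_le[OF ab])
qed

section \<open>\<open>L\<^sup>p\<close> spaces\<close>

lemma memLp_measurable: "memLp M N p X \<Longrightarrow> X \<in> borel_measurable N"
  by (simp add: memLp_def)

lemma memLp_dominated:
  assumes sub: "subalgebra M N" and p: "1 \<le> p"
    and X: "memLp M N p X" and Y: "memLp M N p Y"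
    and g: "g \<in> borel_measurable N" and c: "0 \<le> c"
    and bound: "\<And>x. \<bar>g x\<bar> \<le> c * max \<bar>X x\<bar> \<bar>Y x\<bar>"
  shows "memLp M N p g"
proof (cases "p = \<infinity>")
  case True
  obtain CX where CX: "AE x in M. \<bar>X x\<bar> \<le> CX" using X True by (auto simp: memLp_def)
  obtain CY where CY: "AE x in M. \<bar>Y x\<bar> \<le> CY" using Y True by (auto simp: memLp_def)
  have "AE x in M. \<bar>g x\<bar> \<le> c * max CX CY"
    using CX CY
  proof eventually_elim
    case (elim x)
    then have "c * max \<bar>X x\<bar> \<bar>Y x\<bar> \<le> c * max CX CY" using c by (intro mult_left_mono) auto
    then show ?case using bound[of x] by linarith
  qed
  then show ?thesis using True g by (auto simp: memLp_def)
next
  case False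
  define q where "q = real_of_ereal p"
  have q: "0 \<le> q" using p False unfolding q_def by (cases p) auto
  have "integrable M (\<lambda>x. \<bar>X x\<bar> powr q)" "integrable M (\<lambda>x. \<bar>Y x\<bar> powr q)"
    using X Y False by (simp_all add: memLp_def q_def)
  then have "integrable M (\<lambda>x. c powr q * (\<bar>X x\<bar> powr q + \<bar>Y x\<bar> powr q))"
    by (intro integrable_mult_right Bochner_Integration.integrable_add)
  moreover have "(\<lambda>x. \<bar>g x\<bar> powr q) \<in> borel_measurable M"
    using measurable_from_subalg[OF sub g] by measurable
  moreover have "AE x in M. norm (\<bar>g x\<bar> powr q) \<le> norm (c powr q * (\<bar>X x\<bar> powr q + \<bar>Y x\<bar> powr q))"
  proof (rule AE_I2)
    fix x
    have "\<bar>g x\<bar> powr q \<le> (c * max \<bar>X x\<bar> \<bar>Y x\<bar>) powr q"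
      using bound[of x] q by (intro powr_mono2) auto
    also have "\<dots> = c powr q * max \<bar>X x\<bar> \<bar>Y x\<bar> powr q"
      using c by (simp add: powr_mult)
    also have "\<dots> \<le> c powr q * (\<bar>X x\<bar> powr q + \<bar>Y x\<bar> powr q)"
      by (intro mult_left_mono) (auto simp: max_def)
    finally show "norm (\<bar>g x\<bar> powr q) \<le> norm (c powr q * (\<bar>X x\<bar> powr q + \<bar>Y x\<bar> powr q))"
      by simp
  qed
  ultimately have "integrable M (\<lambda>x. \<bar>g x\<bar> powr q)"
    by (rule Bochner_Integration.integrable_bound)
  then show ?thesis using False g by (simp add: memLp_def q_def)
qed

lemma memLp_lin_comb:
  assumes "subalgebra M N" "1 \<le> p" "memLp M N p X" "memLp M N p Y"
  shows "memLp M N p (\<lambda>x. a * X x + b * Y x)"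
proof (rule memLp_dominated[OF assms, where c = "abs a + abs b"])
  note [measurable] = memLp_measurable[OF assms(3)] memLp_measurable[OF assms(4)]
  show "(\<lambda>x. a * X x + b * Y x) \<in> borel_measurable N" by measurable
  fix x
  have "abs (a * X x + b * Y x) \<le> abs a * abs (X x) + abs b * abs (Y x)"
    by (metis abs_mult abs_triangle_ineq)
  also have "\<dots> \<le> abs a * max (abs (X x)) (abs (Y x)) + abs b * max (abs (X x)) (abs (Y x))"
    by (intro add_mono mult_left_mono) auto
  finally show "abs (a * X x + b * Y x) \<le> (abs a + abs b) * max (abs (X x)) (abs (Y x))"
    by (simp add: distrib_right)
qed simp

lemma memLp_add:
  assumes "subalgebra M N" "1 \<le> p" "memLp M N p X" "memLp M N p Y"
  shows "memLp M N p (\<lambda>x. X x + Y x)"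
  using memLp_lin_comb[OF assms, of 1 1] by simp

lemma memLp_max:
  assumes "subalgebra M N" "1 \<le> p" "memLp M N p X" "memLp M N p Y"
  shows "memLp M N p (\<lambda>x. max (X x) (Y x))"
proof (rule memLp_dominated[OF assms, where c = 1])
  note [measurable] = memLp_measurable[OF assms(3)] memLp_measurable[OF assms(4)]
  show "(\<lambda>x. max (X x) (Y x)) \<in> borel_measurable N" by measurable
qed auto

lemma memLp_mono_sets:
  assumes "memLp M N p X" "sets N \<subseteq> sets N'" "space N = space N'"
  shows "memLp M N' p X"
proof -
  have "subalgebra N' N" using assms(2,3) by (simp add: subalgebra_def)
  then have "X \<in> borel_measurable N'"
    using measurable_from_subalg memLp_measurable[OF assms(1)] by blast
  then show ?thesis using assms(1) by (simp add: memLp_def)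
qed

section \<open>Essential infimum\<close>

lemma is_ess_inf_measurable: "is_ess_inf M N S Z \<Longrightarrow> Z \<in> borel_measurable N"
  by (simp add: is_ess_inf_def)

lemma is_ess_inf_lower: "is_ess_inf M N S Z \<Longrightarrow> Y \<in> S \<Longrightarrow> AE x in M. Z x \<le> ereal (Y x)"
  by (simp add: is_ess_inf_def)

lemma is_ess_inf_greatest:
  "is_ess_inf M N S Z \<Longrightarrow> W \<in> borel_measurable N \<Longrightarrow>
    (\<And>Y. Y \<in> S \<Longrightarrow> AE x in M. W x \<le> ereal (Y x)) \<Longrightarrow> AE x in M. W x \<le> Z x"
  by (simp add: is_ess_inf_def)

lemma is_ess_inf_antimono:
  assumes "is_ess_inf M N S Z" "is_ess_inf M N S' Z'" "S \<subseteq> S'"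
  shows "AE x in M. Z' x \<le> Z x"
proof (rule is_ess_inf_greatest[OF assms(1) is_ess_inf_measurable[OF assms(2)]])
  show "AE x in M. Z' x \<le> ereal (Y x)" if "Y \<in> S" for Y
    using is_ess_inf_lower[OF assms(2)] that assms(3) by blast
qed

lemma is_ess_inf_translate:
  assumes Z: "is_ess_inf M N S Z" and Z': "is_ess_inf M N S' Z'"
    and c: "c \<in> borel_measurable N" and translate: "\<And>Y. Y \<in> S \<Longrightarrow> (\<lambda>x. Y x + c x) \<in> S'"
  shows "AE x in M. Z' x - ereal (c x) \<le> Z x"
proof (rule is_ess_inf_greatest[OF Z])
  show "(\<lambda>x. Z' x - ereal (c x)) \<in> borel_measurable N"
    using is_ess_inf_measurable[OF Z'] c by measurable
  fix Y assume "Y \<in> S"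
  from is_ess_inf_lower[OF Z' translate[OF this]]
  show "AE x in M. Z' x - ereal (c x) \<le> ereal (Y x)"
    by eventually_elim (auto simp: ereal_minus_le_iff)
qed

lemma is_ess_inf_residual:
  fixes g h :: "ereal \<Rightarrow> ereal \<Rightarrow> ereal"
  assumes Z: "is_ess_inf M N S Z"
    and residual: "\<And>w v z. h w v \<le> z \<longleftrightarrow> w \<le> g z v"
    and meas: "(\<lambda>x. h (W x) (V x)) \<in> borel_measurable N"
    and bound: "\<And>Y. Y \<in> S \<Longrightarrow> AE x in M. W x \<le> g (ereal (Y x)) (V x)"
  shows "AE x in M. W x \<le> g (Z x) (V x)"
proof -
  have "AE x in M. h (W x) (V x) \<le> Z x"
    using is_ess_inf_greatest[OF Z meas] bound by (simp add: residual)
  then show ?thesis by (simp add: residual)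
qed

lemma is_ess_inf_le_binop:
  fixes g h k :: "ereal \<Rightarrow> ereal \<Rightarrow> ereal"
  assumes ZA: "is_ess_inf M N SA ZA" and ZB: "is_ess_inf M N SB ZB"
    and SB: "SB \<subseteq> borel_measurable N" and W: "W \<in> borel_measurable N"
    and residual1: "\<And>w v z. h w v \<le> z \<longleftrightarrow> w \<le> g z v"
    and residual2: "\<And>w v z. k w v \<le> z \<longleftrightarrow> w \<le> g v z"
    and meas1: "\<And>V. V \<in> borel_measurable N \<Longrightarrow> (\<lambda>x. h (W x) (V x)) \<in> borel_measurable N"
    and meas2: "\<And>V. V \<in> borel_measurable N \<Longrightarrow> (\<lambda>x. k (W x) (V x)) \<in> borel_measurable N"
    and bound: "\<And>YA YB. YA \<in> SA \<Longrightarrow> YB \<in> SB \<Longrightarrow> AE x in M. W x \<le> g (ereal (YA x)) (ereal (YB x))"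
  shows "AE x in M. W x \<le> g (ZA x) (ZB x)"
proof (rule is_ess_inf_residual[OF ZB residual2 meas2[OF is_ess_inf_measurable[OF ZA]]])
  fix YB assume "YB \<in> SB"
  then have "(\<lambda>x. ereal (YB x)) \<in> borel_measurable N" using SB by auto
  with \<open>YB \<in> SB\<close> show "AE x in M. W x \<le> g (ZA x) (ereal (YB x))"
    by (intro is_ess_inf_residual[OF ZA residual1 meas1] bound)
qed

lemma is_ess_inf_le_max:
  assumes "is_ess_inf M N SA ZA" "is_ess_inf M N SB ZB" "SB \<subseteq> borel_measurable N"
    and W: "W \<in> borel_measurable N"
    and "\<And>YA YB. YA \<in> SA \<Longrightarrow> YB \<in> SB \<Longrightarrow> AE x in M. W x \<le> max (ereal (YA x)) (ereal (YB x))"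
  shows "AE x in M. W x \<le> max (ZA x) (ZB x)"
proof -
  have meas: "(\<lambda>x. if W x \<le> V x then -\<infinity> else W x) \<in> borel_measurable N"
    if "V \<in> borel_measurable N" for V
    using W that by measurable
  show ?thesis
    by (rule is_ess_inf_le_binop[where h = "\<lambda>w v. if w \<le> v then -\<infinity> else w"
          and k = "\<lambda>w v. if w \<le> v then -\<infinity> else w", OF assms(1-4) _ _ meas meas])
      (use assms(5) in \<open>auto simp: le_max_iff_disj\<close>)
qed

text \<open>The least \<open>z\<close> with \<open>w \<le> l z + (1 - l) v\<close>. It exists because \<open>z \<mapsto> l z + (1 - l) v\<close> preserves
  all infima, the empty one included: for \<open>v = \<infinity>\<close> the map is constantly \<open>\<infinity>\<close>, as \<open>-\<infinity> + \<infinity> = \<infinity>\<close>.\<close>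

definition convex_comb_residual :: "real \<Rightarrow> ereal \<Rightarrow> ereal \<Rightarrow> ereal" where
  "convex_comb_residual l w v =
     (if v = \<infinity> then -\<infinity> else if v = -\<infinity> then (if w = -\<infinity> then -\<infinity> else \<infinity>)
      else (w - ereal ((1 - l) * real_of_ereal v)) / ereal l)"

lemma convex_comb_residual_le_iff:
  assumes "0 < l" "l < 1"
  shows "convex_comb_residual l w v \<le> z \<longleftrightarrow> w \<le> ereal l * z + ereal (1 - l) * v"
  using assms by (cases v; cases w; cases z) (auto simp: convex_comb_residual_def field_simps)

lemma measurable_convex_comb_residual [measurable]:
  assumes [measurable]: "W \<in> borel_measurable N" "V \<in> borel_measurable N"
  shows "(\<lambda>x. convex_comb_residual l (W x) (V x)) \<in> borel_measurable N"
  unfolding convex_comb_residual_def by measurable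

lemma is_ess_inf_le_convex_comb:
  assumes "is_ess_inf M N SA ZA" "is_ess_inf M N SB ZB" "SB \<subseteq> borel_measurable N"
    and W: "W \<in> borel_measurable N" and l: "0 < l" "l < 1"
    and "\<And>YA YB. YA \<in> SA \<Longrightarrow> YB \<in> SB \<Longrightarrow>
      AE x in M. W x \<le> ereal l * ereal (YA x) + ereal (1 - l) * ereal (YB x)"
  shows "AE x in M. W x \<le> ereal l * ZA x + ereal (1 - l) * ZB x"
proof (rule is_ess_inf_le_binop[OF assms(1-4), where h = "convex_comb_residual l"
      and k = "convex_comb_residual (1 - l)"])
  show "convex_comb_residual (1 - l) w v \<le> z \<longleftrightarrow> w \<le> ereal l * v + ereal (1 - l) * z" for w v z
    using convex_comb_residual_le_iff[of "1 - l" w v z] l by (simp add: add.commute)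
qed (use assms(7) W l in \<open>simp_all add: convex_comb_residual_le_iff\<close>)

section \<open>The shortfall risk measure\<close>

lemma comp_le_of_shift_le:
  fixes g :: "ereal \<Rightarrow> ereal" and h :: "real \<Rightarrow> real \<Rightarrow> ereal"
  assumes g: "mono_on {x. x < \<infinity>} g" and h: "\<And>y k. h y k < \<infinity>"
    and shift: "\<And>y k c. 0 < c \<Longrightarrow> h y k \<le> h (y - c) (k + c)" and c: "0 \<le> c"
  shows "g (h (y + c) k) \<le> g (h y (k + c))"
proof (cases "c = 0")
  case False
  then have "h (y + c) k \<le> h y (k + c)" using shift[of c "y + c" k] c by simp
  then show ?thesis using h by (intro mono_onD[OF g]) auto
qed simp

locale shortfall_setting =
  fixes M :: "'a measure" and F :: "real \<Rightarrow> 'a measure" and p :: ereal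
    and f :: "real \<Rightarrow> real \<Rightarrow> real \<Rightarrow> ereal" and U :: "real \<Rightarrow> ereal \<Rightarrow> ereal"
    and B :: "real \<Rightarrow> real \<Rightarrow> real" and t u :: real
  assumes sigma_finite_Ft: "sigma_finite_subalgebra M (F t)"
    and subalgebra_Fu: "subalgebra M (F u)"
    and sets_Ft_le_Fu: "sets (F t) \<subseteq> sets (F u)"
    and one_le_p: "1 \<le> p"
    and utility_less_top: "\<And>y m. U u (f u y m) < \<infinity>"
    and cond_exp_wd: "\<And>X m. memLp M (F u) p X \<Longrightarrow> memLp M (F t) p m \<Longrightarrow>
      ext_cond_exp_wd M (F t) (\<lambda>\<omega>. U u (f u (X \<omega>) (m \<omega>)))"
begin

abbreviation accept :: "('a \<Rightarrow> real) \<Rightarrow> ('a \<Rightarrow> real) set" where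
  "accept X \<equiv> shortfall_accept M F p f U B t u X"

lemma subalgebra_Ft: "subalgebra M (F t)"
  using sigma_finite_Ft by (simp add: sigma_finite_subalgebra_def)

lemma memLp_Ft_imp_Fu: "memLp M (F t) p m \<Longrightarrow> memLp M (F u) p m"
  by (rule memLp_mono_sets[OF _ sets_Ft_le_Fu])
    (use subalgebra_Ft subalgebra_Fu in \<open>auto simp: subalgebra_def\<close>)

lemma accept_iff: "m \<in> accept X \<longleftrightarrow> memLp M (F t) p m \<and>
    (AE \<omega> in M. ereal (B t u) \<le> ext_cond_exp M (F t) (\<lambda>x. U u (f u (X x) (m x))) \<omega>)"
  by (simp add: shortfall_accept_def)

lemma accept_subset_measurable: "accept X \<subseteq> borel_measurable (F t)"
  by (auto simp: accept_iff memLp_def)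

lemma accept_of_concave_domination:
  assumes X: "memLp M (F u) p X" and X1: "memLp M (F u) p X1" and X2: "memLp M (F u) p X2"
    and m: "memLp M (F t) p m" and m1: "m1 \<in> accept X1" and m2: "m2 \<in> accept X2"
    and a: "0 \<le> a" "a \<le> 1"
    and le: "AE \<omega> in M. ereal a * U u (f u (X1 \<omega>) (m1 \<omega>)) + ereal (1 - a) * U u (f u (X2 \<omega>) (m2 \<omega>))
      \<le> U u (f u (X \<omega>) (m \<omega>))"
  shows "m \<in> accept X"
proof -
  interpret sigma_finite_subalgebra M "F t" by (rule sigma_finite_Ft)
  have m1': "memLp M (F t) p m1" "AE \<omega> in M. ereal (B t u) \<le> ext_cond_exp M (F t) (\<lambda>x. U u (f u (X1 x) (m1 x))) \<omega>"
    and m2': "memLp M (F t) p m2" "AE \<omega> in M. ereal (B t u) \<le> ext_cond_exp M (F t) (\<lambda>x. U u (f u (X2 x) (m2 x))) \<omega>"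
    using m1 m2 by (simp_all add: accept_iff)
  have "AE \<omega> in M. ereal (B t u) \<le> ext_cond_exp M (F t) (\<lambda>x. U u (f u (X x) (m x))) \<omega>"
    by (rule ext_cond_exp_ge_of_convex_comb_le[where a = a and b = "1 - a", OF _ _ _ _ _ le
          cond_exp_wd[OF X m] cond_exp_wd[OF X1 m1'(1)] cond_exp_wd[OF X2 m2'(1)] m1'(2) m2'(2)])
      (use a in \<open>simp_all add: utility_less_top[THEN less_imp_neq]\<close>)
  then show ?thesis using m by (simp add: accept_iff)
qed

lemma accept_mono:
  assumes "memLp M (F u) p X" "memLp M (F u) p X'" "memLp M (F t) p m'" "m \<in> accept X"
    and "AE \<omega> in M. U u (f u (X \<omega>) (m \<omega>)) \<le> U u (f u (X' \<omega>) (m' \<omega>))"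
  shows "m' \<in> accept X'"
  using assms(5)
  by (intro accept_of_concave_domination[OF assms(2,1,1,3,4,4), of 1]) (auto simp: zero_ereal_def[symmetric])

lemma shortfall_rm_antimono:
  assumes mono: "\<And>m. mono (\<lambda>y. U u (f u y m))"
    and X: "memLp M (F u) p X" and Y: "memLp M (F u) p Y" and XY: "AE \<omega> in M. X \<omega> \<le> Y \<omega>"
    and ZX: "is_shortfall_rm M F p f U B t u X ZX" and ZY: "is_shortfall_rm M F p f U B t u Y ZY"
  shows "AE \<omega> in M. ZY \<omega> \<le> ZX \<omega>"
proof (rule is_ess_inf_antimono[OF ZX[unfolded is_shortfall_rm_def] ZY[unfolded is_shortfall_rm_def]])
  show "accept X \<subseteq> accept Y"
  proof
    fix m assume m: "m \<in> accept X"
    show "m \<in> accept Y"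
    proof (rule accept_mono[OF X Y _ m])
      show "memLp M (F t) p m" using m by (simp add: accept_iff)
      show "AE \<omega> in M. U u (f u (X \<omega>) (m \<omega>)) \<le> U u (f u (Y \<omega>) (m \<omega>))"
        using XY by eventually_elim (rule monoD[OF mono])
    qed
  qed
qed

lemma shortfall_rm_quasiconvex:
  assumes mono: "\<And>y. mono (\<lambda>m. U u (f u y m))"
    and concave: "\<And>m. concave_real_ereal (\<lambda>y. U u (f u y m))"
    and X: "memLp M (F u) p X" and Y: "memLp M (F u) p Y" and l: "0 \<le> l" "l \<le> 1"
    and ZX: "is_shortfall_rm M F p f U B t u X ZX" and ZY: "is_shortfall_rm M F p f U B t u Y ZY"
    and ZL: "is_shortfall_rm M F p f U B t u (\<lambda>\<omega>. l * X \<omega> + (1 - l) * Y \<omega>) ZL"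
  shows "AE \<omega> in M. ZL \<omega> \<le> max (ZX \<omega>) (ZY \<omega>)"
proof (rule is_ess_inf_le_max[OF ZX[unfolded is_shortfall_rm_def] ZY[unfolded is_shortfall_rm_def]
      accept_subset_measurable is_ess_inf_measurable[OF ZL[unfolded is_shortfall_rm_def]]])
  fix mX mY assume mX: "mX \<in> accept X" and mY: "mY \<in> accept Y"
  define m where "m = (\<lambda>\<omega>. max (mX \<omega>) (mY \<omega>))"
  have m: "memLp M (F t) p m"
    unfolding m_def using mX mY by (intro memLp_max subalgebra_Ft one_le_p) (auto simp: accept_iff)
  have mX': "m \<in> accept X"
    by (rule accept_mono[OF X X m mX]) (intro AE_I2 monoD[OF mono], simp add: m_def)
  have mY': "m \<in> accept Y"
    by (rule accept_mono[OF Y Y m mY]) (intro AE_I2 monoD[OF mono], simp add: m_def)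
  have "ereal l * U u (f u (X \<omega>) (m \<omega>)) + ereal (1 - l) * U u (f u (Y \<omega>) (m \<omega>))
      \<le> U u (f u (l * X \<omega> + (1 - l) * Y \<omega>) (m \<omega>))" for \<omega>
    using concave[of "m \<omega>"] l unfolding concave_real_ereal_def by blast
  then have "m \<in> accept (\<lambda>\<omega>. l * X \<omega> + (1 - l) * Y \<omega>)"
    by (intro accept_of_concave_domination[OF memLp_lin_comb[OF subalgebra_Fu one_le_p X Y] X Y m mX' mY' l]
        AE_I2)
  from is_ess_inf_lower[OF ZL[unfolded is_shortfall_rm_def] this]
  show "AE \<omega> in M. ZL \<omega> \<le> max (ereal (mX \<omega>)) (ereal (mY \<omega>))"
    by (simp add: m_def)
qed

lemma shortfall_rm_convex:
  assumes concave: "jointly_concave_ereal (\<lambda>y m. U u (f u y m))"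
    and X: "memLp M (F u) p X" and Y: "memLp M (F u) p Y" and l: "0 \<le> l" "l \<le> 1"
    and ZX: "is_shortfall_rm M F p f U B t u X ZX" and ZY: "is_shortfall_rm M F p f U B t u Y ZY"
    and ZL: "is_shortfall_rm M F p f U B t u (\<lambda>\<omega>. l * X \<omega> + (1 - l) * Y \<omega>) ZL"
  shows "AE \<omega> in M. ZL \<omega> \<le> ereal l * ZX \<omega> + ereal (1 - l) * ZY \<omega>"
proof -
  txt \<open>For \<open>l \<in> {0, 1}\<close> there is no residual (\<open>z \<mapsto> v\<close> does not preserve the empty infimum),
    but then the combination is \<open>Y\<close> or \<open>X\<close> itself.\<close>
  consider "l = 0" | "l = 1" | "0 < l" "l < 1" using l by fastforce
  then show ?thesis
  proof cases
    case 1
    then have "is_shortfall_rm M F p f U B t u Y ZL" using ZL by simp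
    from is_ess_inf_antimono[OF ZY[unfolded is_shortfall_rm_def] this[unfolded is_shortfall_rm_def]]
    show ?thesis using 1 by (simp add: zero_ereal_def[symmetric] one_ereal_def[symmetric])
  next
    case 2
    then have "is_shortfall_rm M F p f U B t u X ZL" using ZL by simp
    from is_ess_inf_antimono[OF ZX[unfolded is_shortfall_rm_def] this[unfolded is_shortfall_rm_def]]
    show ?thesis using 2 by (simp add: zero_ereal_def[symmetric] one_ereal_def[symmetric])
  next
    case 3
    show ?thesis
    proof (rule is_ess_inf_le_convex_comb[OF ZX[unfolded is_shortfall_rm_def] ZY[unfolded is_shortfall_rm_def]
          accept_subset_measurable is_ess_inf_measurable[OF ZL[unfolded is_shortfall_rm_def]] 3])
      fix mX mY assume mX: "mX \<in> accept X" and mY: "mY \<in> accept Y"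
      define m where "m = (\<lambda>\<omega>. l * mX \<omega> + (1 - l) * mY \<omega>)"
      have m: "memLp M (F t) p m"
        unfolding m_def using mX mY by (intro memLp_lin_comb subalgebra_Ft one_le_p) (auto simp: accept_iff)
      have "ereal l * U u (f u (X \<omega>) (mX \<omega>)) + ereal (1 - l) * U u (f u (Y \<omega>) (mY \<omega>))
          \<le> U u (f u (l * X \<omega> + (1 - l) * Y \<omega>) (m \<omega>))" for \<omega>
        using concave l unfolding jointly_concave_ereal_def m_def by blast
      then have "m \<in> accept (\<lambda>\<omega>. l * X \<omega> + (1 - l) * Y \<omega>)"
        by (intro accept_of_concave_domination[OF memLp_lin_comb[OF subalgebra_Fu one_le_p X Y] X Y m mX mY l]
            AE_I2)
      from is_ess_inf_lower[OF ZL[unfolded is_shortfall_rm_def] this]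
      show "AE \<omega> in M. ZL \<omega> \<le> ereal l * ereal (mX \<omega>) + ereal (1 - l) * ereal (mY \<omega>)"
        by (simp add: m_def)
    qed
  qed
qed

lemma shortfall_rm_cash_subadditive:
  assumes transfer: "\<And>y k c. 0 \<le> c \<Longrightarrow> U u (f u (y + c) k) \<le> U u (f u y (k + c))"
    and X: "memLp M (F u) p X" and c: "memLp M (F t) p c" and c_nonneg: "AE \<omega> in M. 0 \<le> c \<omega>"
    and ZX: "is_shortfall_rm M F p f U B t u X ZX"
    and Zc: "is_shortfall_rm M F p f U B t u (\<lambda>\<omega>. X \<omega> + c \<omega>) Zc"
  shows "AE \<omega> in M. ZX \<omega> - ereal (c \<omega>) \<le> Zc \<omega>"
proof (rule is_ess_inf_translate[OF Zc[unfolded is_shortfall_rm_def] ZX[unfolded is_shortfall_rm_def]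
      memLp_measurable[OF c]])
  fix m assume m: "m \<in> accept (\<lambda>\<omega>. X \<omega> + c \<omega>)"
  have "memLp M (F t) p (\<lambda>\<omega>. m \<omega> + c \<omega>)"
    using m c by (intro memLp_add subalgebra_Ft one_le_p) (auto simp: accept_iff)
  then show "(\<lambda>\<omega>. m \<omega> + c \<omega>) \<in> accept X"
  proof (rule accept_mono[OF memLp_add[OF subalgebra_Fu one_le_p X memLp_Ft_imp_Fu[OF c]] X _ m])
    show "AE \<omega> in M. U u (f u (X \<omega> + c \<omega>) (m \<omega>)) \<le> U u (f u (X \<omega>) (m \<omega> + c \<omega>))"
      using c_nonneg by eventually_elim (rule transfer)
  qed
qed

end

theorem mainTheorem11:
  fixes M :: "'a measure" and F :: "real \<Rightarrow> 'a measure" and T :: real and p :: ereal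
    and f :: "real \<Rightarrow> real \<Rightarrow> real \<Rightarrow> ereal" and U :: "real \<Rightarrow> ereal \<Rightarrow> ereal"
    and B :: "real \<Rightarrow> real \<Rightarrow> real" and t u :: real
  assumes M: "prob_space M"
    and filt_sub: "\<And>s. s \<in> {0..T} \<Longrightarrow> subalgebra M (F s)"
    and filt_mono: "\<And>s r. 0 \<le> s \<Longrightarrow> s \<le> r \<Longrightarrow> r \<le> T \<Longrightarrow> sets (F s) \<subseteq> sets (F r)"
    and p: "1 \<le> p"
    and f_fin: "\<And>v y m. v \<in> {0..T} \<Longrightarrow> f v y m < \<infinity>"
    and f_nonconst: "\<And>v. v \<in> {0..T} \<Longrightarrow> \<exists>y1 m1 y2 m2. f v y1 m1 \<noteq> f v y2 m2"
    and U_fin: "\<And>v x. v \<in> {0..T} \<Longrightarrow> x < \<infinity> \<Longrightarrow> U v x < \<infinity>"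
    and U_concave: "\<And>v. v \<in> {0..T} \<Longrightarrow> concave_ereal_on {x. x < \<infinity>} (U v)"
    and U_mono: "\<And>v. v \<in> {0..T} \<Longrightarrow> mono_on {x. x < \<infinity>} (U v)"
    and U_nontriv: "\<And>v. v \<in> {0..T} \<Longrightarrow> \<exists>x y. x < \<infinity> \<and> y < \<infinity> \<and> U v x \<noteq> U v y"
    and cexp_wd: "\<And>s r X m. 0 \<le> s \<Longrightarrow> s \<le> r \<Longrightarrow> r \<le> T \<Longrightarrow> memLp M (F r) p X \<Longrightarrow>
        memLp M (F s) p m \<Longrightarrow> ext_cond_exp_wd M (F s) (\<lambda>\<omega>. U r (f r (X \<omega>) (m \<omega>)))"
    and tu: "0 \<le> t" "t \<le> u" "u \<le> T"
  shows
   "((\<forall>y. mono (\<lambda>m. U u (f u y m))) \<and> (\<forall>m. mono (\<lambda>y. U u (f u y m))) \<and>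
     (\<forall>m. concave_real_ereal (\<lambda>y. U u (f u y m)))
     \<longrightarrow>
      (\<forall>X Y ZX ZY. memLp M (F u) p X \<longrightarrow> memLp M (F u) p Y \<longrightarrow>
         (AE \<omega> in M. X \<omega> \<le> Y \<omega>) \<longrightarrow>
         is_shortfall_rm M F p f U B t u X ZX \<longrightarrow> is_shortfall_rm M F p f U B t u Y ZY \<longrightarrow>
         (AE \<omega> in M. ZY \<omega> \<le> ZX \<omega>))
    \<and> (\<forall>X Y l ZX ZY Zl. memLp M (F u) p X \<longrightarrow> memLp M (F u) p Y \<longrightarrow> 0 \<le> l \<longrightarrow> l \<le> 1 \<longrightarrow>
         is_shortfall_rm M F p f U B t u X ZX \<longrightarrow> is_shortfall_rm M F p f U B t u Y ZY \<longrightarrow>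
         is_shortfall_rm M F p f U B t u (\<lambda>\<omega>. l * X \<omega> + (1 - l) * Y \<omega>) Zl \<longrightarrow>
         (AE \<omega> in M. Zl \<omega> \<le> max (ZX \<omega>) (ZY \<omega>))))
  \<and> ((\<forall>y. mono (\<lambda>m. U u (f u y m))) \<and> (\<forall>m. mono (\<lambda>y. U u (f u y m))) \<and>
     (\<forall>m. concave_real_ereal (\<lambda>y. U u (f u y m))) \<and>
     jointly_concave_ereal (\<lambda>y m. U u (f u y m))
     \<longrightarrow>
      (\<forall>X Y l ZX ZY Zl. memLp M (F u) p X \<longrightarrow> memLp M (F u) p Y \<longrightarrow> 0 \<le> l \<longrightarrow> l \<le> 1 \<longrightarrow>
         is_shortfall_rm M F p f U B t u X ZX \<longrightarrow> is_shortfall_rm M F p f U B t u Y ZY \<longrightarrow>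
         is_shortfall_rm M F p f U B t u (\<lambda>\<omega>. l * X \<omega> + (1 - l) * Y \<omega>) Zl \<longrightarrow>
         (AE \<omega> in M. Zl \<omega> \<le> ereal l * ZX \<omega> + ereal (1 - l) * ZY \<omega>)))
  \<and> ((\<forall>y. mono (\<lambda>m. U u (f u y m))) \<and> (\<forall>m. mono (\<lambda>y. U u (f u y m))) \<and>
     (\<forall>m. concave_real_ereal (\<lambda>y. U u (f u y m))) \<and>
     (\<forall>y k m. 0 < m \<longrightarrow> f u y k \<le> f u (y - m) (k + m))
     \<longrightarrow>
      (\<forall>X mt ZX Zm. memLp M (F u) p X \<longrightarrow> memLp M (F t) p mt \<longrightarrow> (AE \<omega> in M. 0 \<le> mt \<omega>) \<longrightarrow>
         is_shortfall_rm M F p f U B t u X ZX \<longrightarrow>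
         is_shortfall_rm M F p f U B t u (\<lambda>\<omega>. X \<omega> + mt \<omega>) Zm \<longrightarrow>
         (AE \<omega> in M. ZX \<omega> - ereal (mt \<omega>) \<le> Zm \<omega>)))"
proof -
  have t: "t \<in> {0..T}" and u: "u \<in> {0..T}" using tu by auto
  have "sigma_finite_subalgebra M (F t)"
    using M filt_sub[OF t]
    by (intro finite_measure_subalgebra_is_sigma_finite)
      (simp add: finite_measure_subalgebra_def finite_measure_subalgebra_axioms_def prob_space_def)
  then interpret shortfall_setting M F p f U B t u
    by (rule shortfall_setting.intro[where M = M and F = F and p = p and f = f and U = U and t = t and u = u,
          OF _ filt_sub[OF u] filt_mono[OF tu] p U_fin[OF u f_fin[OF u]]
          cexp_wd[OF tu]])
  have transfer: "U u (f u (y + c) k) \<le> U u (f u y (k + c))"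
    if "\<forall>y k m. 0 < m \<longrightarrow> f u y k \<le> f u (y - m) (k + m)" "0 \<le> c" for y k c
    by (rule comp_le_of_shift_le[OF U_mono[OF u] f_fin[OF u]]) (use that in auto)
  show ?thesis
    by (intro conjI impI allI; elim conjE)
      (blast intro: shortfall_rm_antimono shortfall_rm_quasiconvex shortfall_rm_convex
        shortfall_rm_cash_subadditive transfer)+
qed

end
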